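(* Let $\mathcal S$ be a trajectory set such that for every $S\in\mathcal S$ and every $j\in\mathbb N_0$ the stopped trajectory $(S_{\min\{i,j\}})_{i\in\mathbb N_0}$ belongs to $\mathcal S$. Then (LOP) and (K) hold for $\mathcal S$.
   Context: Fix $s_0\in\mathbb R$. A trajectory set is any set $\mathcal S$ of real sequences $S=(S_j)_{j\in\mathbb N_0}$ with $S_0=s_0$. A simple portfolio $(V,n,H)$ consists of $V\in\mathbb R$, $n\in\mathbb N$ and nonanticipating functions $H_i:\mathcal S\to\mathbb R$, $0\le i\le n-1$ (i.e. $H_i(S)=h_i(S_0,\dots,S_i)$ for some arbitrary $h_i:\mathbb R^{i+1}\to\mathbb R$). Its wealth is $\Pi^{V,n,H}_j(S)=V+\sum_{i=0}^{\min\{j,n\}-1}H_i(S)(S_{i+1}-S_i)$ and $\Pi^{V,n,H}_\infty:=\Pi^{V,n,H}_n$; it is positive if $V\ge0$ and $\Pi^{V,n,H}_\infty\ge0$ on $\mathcal S$. A positive generalized portfolio is a sequence $(V_m,n_m,H_m)_{m\in\mathbb N}$ of positive simple portfolios; it superhedges $f:\mathcal S\to[0,+\infty]$ with initial endowment $\sum_{m\ge1}V_m$ if $f\le\sum_{m=1}^\infty\Pi^{V_m,n_m,H_m}_\infty$ on $\mathcal S$. $\bar I(f)$ is the infimum of initial endowments of positive generalized portfolios superhedging $f$. Let $\mathcal E=\{\Pi^{V,n,H}_\infty\}$ over all simple portfolios. (LOP): whenever two simple portfolios have equal terminal wealth $\Pi_\infty$ at every $S\in\mathcal S$, their initial endowments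 coincide; under (LOP), $I:\mathcal E\to\mathbb R$, $I(\Pi^{V,n,H}_\infty)=V$, is well defined. (K): $I(f)+\bar I(f^-)\le\bar I(f^+)$ for every $f\in\mathcal E$ ($f^\pm$ positive/negative parts). *)

theory Defs
  imports Complex_Main "HOL-Library.Extended_Real"
begin

type_synonym traj = "nat \<Rightarrow> real"

definition trajectory_set :: "real \<Rightarrow> traj set \<Rightarrow> bool" where
  "trajectory_set s0 \<S> \<longleftrightarrow> (\<forall>S\<in>\<S>. S 0 = s0)"

text \<open>Strategies are given as functions H :: nat => traj => real; H i is the position
  on [i, i+1]. Nonanticipating: H i S depends only on S 0, ..., S i.\<close>
definition nonanticipating :: "nat \<Rightarrow> (nat \<Rightarrow> traj \<Rightarrow> real) \<Rightarrow> bool" where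
  "nonanticipating n H \<longleftrightarrow>
     (\<forall>i<n. \<forall>S S'. (\<forall>k\<le>i. S k = S' k) \<longrightarrow> H i S = H i S')"

definition simple_portfolio :: "real \<Rightarrow> nat \<Rightarrow> (nat \<Rightarrow> traj \<Rightarrow> real) \<Rightarrow> bool" where
  "simple_portfolio V n H \<longleftrightarrow> n \<ge> 1 \<and> nonanticipating n H"

definition wealth :: "real \<Rightarrow> nat \<Rightarrow> (nat \<Rightarrow> traj \<Rightarrow> real) \<Rightarrow> nat \<Rightarrow> traj \<Rightarrow> real" where
  "wealth V n H j S = V + (\<Sum>i<min j n. H i S * (S (Suc i) - S i))"

definition wealth_inf :: "real \<Rightarrow> nat \<Rightarrow> (nat \<Rightarrow> traj \<Rightarrow> real) \<Rightarrow> traj \<Rightarrow> real" where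
  "wealth_inf V n H S = wealth V n H n S"

definition positive_portfolio ::
  "traj set \<Rightarrow> real \<Rightarrow> nat \<Rightarrow> (nat \<Rightarrow> traj \<Rightarrow> real) \<Rightarrow> bool" where
  "positive_portfolio \<S> V n H \<longleftrightarrow>
     simple_portfolio V n H \<and> V \<ge> 0 \<and> (\<forall>S\<in>\<S>. wealth_inf V n H S \<ge> 0)"

definition superhedges ::
  "traj set \<Rightarrow> (nat \<Rightarrow> real) \<Rightarrow> (nat \<Rightarrow> nat) \<Rightarrow> (nat \<Rightarrow> nat \<Rightarrow> traj \<Rightarrow> real)
     \<Rightarrow> (traj \<Rightarrow> ereal) \<Rightarrow> bool" where
  "superhedges \<S> Vs ns Hs f \<longleftrightarrow>
     (\<forall>m. positive_portfolio \<S> (Vs m) (ns m) (Hs m)) \<and>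
     (\<forall>S\<in>\<S>. f S \<le> (\<Sum>m. ereal (wealth_inf (Vs m) (ns m) (Hs m) S)))"

text \<open>Outer integral: infimum of initial endowments (inf of the empty set is +oo).\<close>
definition Ibar :: "traj set \<Rightarrow> (traj \<Rightarrow> ereal) \<Rightarrow> ereal" where
  "Ibar \<S> f = (INF p \<in> {(Vs, ns, Hs). superhedges \<S> Vs ns Hs f}.
                 (case p of (Vs, ns, Hs) \<Rightarrow> (\<Sum>m. ereal (Vs m))))"

definition LOP :: "traj set \<Rightarrow> bool" where
  "LOP \<S> \<longleftrightarrow> (\<forall>V n H V' n' H'. simple_portfolio V n H \<longrightarrow> simple_portfolio V' n' H' \<longrightarrow>
      (\<forall>S\<in>\<S>. wealth_inf V n H S = wealth_inf V' n' H' S) \<longrightarrow> V = V')"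

text \<open>Condition (K), with I(Pi_inf of (V,n,H)) = V (well defined under LOP),
  f^+ = max f 0 and f^- = max (-f) 0.\<close>
definition condK :: "traj set \<Rightarrow> bool" where
  "condK \<S> \<longleftrightarrow> (\<forall>V n H. simple_portfolio V n H \<longrightarrow>
      ereal V + Ibar \<S> (\<lambda>S. ereal (max (- wealth_inf V n H S) 0))
        \<le> Ibar \<S> (\<lambda>S. ereal (max (wealth_inf V n H S) 0)))"

end

theory Submission
  imports Defs
begin

text \<open>Fix a simple portfolio with wealth \<open>\<Pi>\<close> and a positive generalized portfolio superhedging
  \<open>\<Pi>\<^sup>+\<close> at finite cost \<open>c\<close>. Since \<open>\<S>\<close> is closed under stopping, applying the superhedge to
  stopped trajectories shows that every component has nonnegative wealth at all times and that
  the total wealth \<open>W\<^sub>j\<close> dominates \<open>\<Pi>\<^sub>j\<close>. While \<open>W\<close> stays finite, holding the aggregate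
  position of the components minus \<open>H\<close>, starting from \<open>c - V\<close>, yields wealth exactly
  \<open>W\<^sub>j - \<Pi>\<^sub>j \<ge> 0\<close> (where the aggregate position diverges the price cannot move, as
  \<open>W\<^sub>j\<^sub>+\<^sub>1\<close> is finite); at time \<open>n\<close> this covers \<open>\<Pi>\<^sup>-\<close>. If \<open>W\<close> first becomes infinite at time \<open>t\<close>,
  then \<open>d\<close> times the components stopped at \<open>t\<close> already have infinite total wealth. So \<open>\<Pi>\<^sup>-\<close> is
  superhedged at cost \<open>c - V + d c\<close> for every \<open>d > 0\<close>, which is (K). (LOP) is read off at a
  constant trajectory.\<close>

definition stopped_traj :: "traj \<Rightarrow> nat \<Rightarrow> traj" where
  "stopped_traj S j = (\<lambda>i. S (min i j))"

definition stopping_closed :: "traj set \<Rightarrow> bool" where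
  "stopping_closed \<S> \<longleftrightarrow> (\<forall>S\<in>\<S>. \<forall>j. stopped_traj S j \<in> \<S>)"

definition position :: "nat \<Rightarrow> (nat \<Rightarrow> traj \<Rightarrow> real) \<Rightarrow> nat \<Rightarrow> traj \<Rightarrow> real" where
  "position n H i S = (if i < n then H i S else 0)"

lemma wealth_0 [simp]: "wealth V n H 0 S = V"
  by (simp add: wealth_def)

lemma wealth_Suc:
  "wealth V n H (Suc j) S = wealth V n H j S + position n H j S * (S (Suc j) - S j)"
proof (cases "j < n")
  case True
  then have "min (Suc j) n = Suc (min j n)" by simp
  with True show ?thesis by (simp add: wealth_def position_def)
next
  case False
  then show ?thesis by (simp add: wealth_def position_def min_def)
qed

lemma position_cong_prefix:
  assumes "nonanticipating n H" and "\<forall>k\<le>i. S k = S' k"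
  shows "position n H i S = position n H i S'"
  using assms unfolding position_def nonanticipating_def by simp

lemma wealth_cong_prefix:
  assumes "nonanticipating n H" and "\<forall>k\<le>j. S k = S' k"
  shows "wealth V n H j S = wealth V n H j S'"
  using assms
proof (induction j)
  case (Suc j)
  then show ?case using position_cong_prefix[OF Suc.prems(1)] by (simp add: wealth_Suc)
qed simp

lemma wealth_stopped_traj:
  assumes "nonanticipating n H"
  shows "wealth V n H k (stopped_traj S j) = wealth V n H (min k j) S"
proof (induction k)
  case (Suc k)
  show ?case
  proof (cases "k < j")
    case True
    have "position n H k (stopped_traj S j) = position n H k S"
      using True by (intro position_cong_prefix[OF assms]) (simp add: stopped_traj_def)
    with Suc.IH True show ?thesis by (simp add: wealth_Suc stopped_traj_def)
  next
    case False
    with Suc.IH show ?thesis by (simp add: wealth_Suc stopped_traj_def)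
  qed
qed simp

lemma wealth_inf_stopped_traj:
  assumes "nonanticipating n H"
  shows "wealth_inf V n H (stopped_traj S j) = wealth V n H j S"
proof -
  have "wealth V n H n (stopped_traj S j) = wealth V n H (min n j) S"
    by (rule wealth_stopped_traj[OF assms])
  also have "\<dots> = wealth V n H j S" by (simp add: wealth_def min_def)
  finally show ?thesis by (simp add: wealth_inf_def)
qed

lemma positive_portfolio_wealth_nonneg:
  assumes "stopping_closed \<S>" and "positive_portfolio \<S> V n H" and "S \<in> \<S>"
  shows "0 \<le> wealth V n H j S"
proof -
  have "nonanticipating n H"
    using assms(2) by (simp add: positive_portfolio_def simple_portfolio_def)
  moreover have "0 \<le> wealth_inf V n H (stopped_traj S j)"
    using assms by (simp add: positive_portfolio_def stopping_closed_def)
  ultimately show ?thesis by (simp add: wealth_inf_stopped_traj)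
qed

lemma LOP_if_constant_trajectory:
  assumes "(\<lambda>_. s) \<in> \<S>"
  shows "LOP \<S>"
  using assms unfolding LOP_def by (force simp: wealth_inf_def wealth_def)

definition gated :: "(nat \<Rightarrow> traj \<Rightarrow> bool) \<Rightarrow> real \<Rightarrow> (nat \<Rightarrow> traj \<Rightarrow> real) \<Rightarrow> nat \<Rightarrow> traj \<Rightarrow> real" where
  "gated q d H i S = (if q i S then d * H i S else 0)"

lemma wealth_inf_gated:
  assumes "\<forall>i<n. q i S \<longleftrightarrow> i < t"
  shows "wealth_inf (d * V) n (gated q d H) S = d * wealth V n H t S"
proof -
  have "(\<Sum>i<n. gated q d H i S * (S (Suc i) - S i))
      = (\<Sum>i\<in>{..<n} \<inter> {i. i < t}. d * (H i S * (S (Suc i) - S i)))"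
    using assms by (auto simp: gated_def sum.inter_restrict intro!: sum.cong)
  also have "{..<n} \<inter> {i. i < t} = {..<min t n}" by auto
  finally show ?thesis by (simp add: wealth_inf_def wealth_def sum_distrib_left algebra_simps)
qed

lemma nat_downclosed_cut:
  fixes P :: "nat \<Rightarrow> bool"
  assumes down: "\<And>i k. P i \<Longrightarrow> k \<le> i \<Longrightarrow> P k" and "\<not> P N"
  obtains t where "\<And>i. P i \<longleftrightarrow> i < t"
proof
  show "P i \<longleftrightarrow> i < (LEAST i. \<not> P i)" for i
    using down LeastI[of "\<lambda>i. \<not> P i", OF \<open>\<not> P N\<close>] not_less_Least[of i "\<lambda>i. \<not> P i"]
    by (meson not_le)
qed

lemma positive_portfolio_gated:
  assumes closed: "stopping_closed \<S>" and pos: "positive_portfolio \<S> V n H" and "0 \<le> d"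
    and down: "\<And>i k S. q i S \<Longrightarrow> k \<le> i \<Longrightarrow> q k S"
    and q_nonant: "\<And>i S S'. \<forall>k\<le>i. S k = S' k \<Longrightarrow> q i S = q i S'"
  shows "positive_portfolio \<S> (d * V) n (gated q d H)"
proof -
  have "nonanticipating n H" and "1 \<le> n" and "0 \<le> V"
    using pos by (auto simp: positive_portfolio_def simple_portfolio_def)
  then have "nonanticipating n (gated q d H)"
    using q_nonant unfolding nonanticipating_def gated_def by metis
  moreover have "0 \<le> wealth_inf (d * V) n (gated q d H) S" if "S \<in> \<S>" for S
  proof -
    obtain t where cut: "\<forall>i<n. q i S \<longleftrightarrow> i < t"
    proof (cases "q n S")
      case True
      then show ?thesis using down that[of n] by (meson less_imp_le)
    next
      case False
      then show ?thesis using nat_downclosed_cut[of "\<lambda>i. q i S"] down that by metis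
    qed
    then show ?thesis
      using wealth_inf_gated[of n q S t, OF cut] positive_portfolio_wealth_nonneg[OF closed pos \<open>S \<in> \<S>\<close>] \<open>0 \<le> d\<close>
      by simp
  qed
  ultimately show ?thesis
    using \<open>1 \<le> n\<close> \<open>0 \<le> V\<close> \<open>0 \<le> d\<close> by (simp add: positive_portfolio_def simple_portfolio_def)
qed

definition total_wealth ::
  "(nat \<Rightarrow> real) \<Rightarrow> (nat \<Rightarrow> nat) \<Rightarrow> (nat \<Rightarrow> nat \<Rightarrow> traj \<Rightarrow> real) \<Rightarrow> nat \<Rightarrow> traj \<Rightarrow> ereal" where
  "total_wealth Vs ns Hs j S = (\<Sum>m. ereal (wealth (Vs m) (ns m) (Hs m) j S))"

definition wealth_finite_upto ::
  "(nat \<Rightarrow> real) \<Rightarrow> (nat \<Rightarrow> nat) \<Rightarrow> (nat \<Rightarrow> nat \<Rightarrow> traj \<Rightarrow> real) \<Rightarrow> nat \<Rightarrow> traj \<Rightarrow> bool" where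
  "wealth_finite_upto Vs ns Hs i S \<longleftrightarrow> (\<forall>k\<le>i. total_wealth Vs ns Hs k S < \<infinity>)"

lemma total_wealth_0 [simp]: "total_wealth Vs ns Hs 0 S = (\<Sum>m. ereal (Vs m))"
  by (simp add: total_wealth_def)

lemma total_wealth_finite:
  assumes "\<And>m. 0 \<le> wealth (Vs m) (ns m) (Hs m) j S" and "total_wealth Vs ns Hs j S < \<infinity>"
  shows "summable (\<lambda>m. wealth (Vs m) (ns m) (Hs m) j S)"
    and "total_wealth Vs ns Hs j S = ereal (\<Sum>m. wealth (Vs m) (ns m) (Hs m) j S)"
  using summable_ereal[OF assms(1)] suminf_ereal[OF assms(1)] assms(2)
  by (auto simp: total_wealth_def)

lemma total_wealth_Suc:
  assumes nonneg: "\<And>m. 0 \<le> wealth (Vs m) (ns m) (Hs m) j S"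
    and finite: "total_wealth Vs ns Hs j S < \<infinity>"
    and summable: "summable (\<lambda>m. position (ns m) (Hs m) j S)"
  shows "total_wealth Vs ns Hs (Suc j) S
    = total_wealth Vs ns Hs j S + ereal ((\<Sum>m. position (ns m) (Hs m) j S) * (S (Suc j) - S j))"
proof -
  let ?w = "\<lambda>m. wealth (Vs m) (ns m) (Hs m) j S"
  let ?g = "\<lambda>m. position (ns m) (Hs m) j S * (S (Suc j) - S j)"
  have "?w sums suminf ?w" and "?g sums ((\<Sum>m. position (ns m) (Hs m) j S) * (S (Suc j) - S j))"
    using total_wealth_finite(1)[OF nonneg finite] summable
    by (simp_all add: summable_sums sums_mult2)
  then have "(\<lambda>m. ereal (?w m + ?g m)) sums ereal (suminf ?w + (\<Sum>m. position (ns m) (Hs m) j S) * (S (Suc j) - S j))"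
    by (simp only: sums_ereal) (rule sums_add)
  then show ?thesis
    using total_wealth_finite(2)[OF nonneg finite]
    by (simp add: total_wealth_def wealth_Suc sums_unique[symmetric])
qed

lemma summable_position_if_price_moves:
  assumes nonneg: "\<And>m j. 0 \<le> wealth (Vs m) (ns m) (Hs m) j S"
    and "total_wealth Vs ns Hs j S < \<infinity>" and "total_wealth Vs ns Hs (Suc j) S < \<infinity>"
    and moves: "S (Suc j) \<noteq> S j"
  shows "summable (\<lambda>m. position (ns m) (Hs m) j S)"
proof -
  let ?w = "\<lambda>j m. wealth (Vs m) (ns m) (Hs m) j S"
  have "summable (\<lambda>m. (?w (Suc j) m - ?w j m) / (S (Suc j) - S j))"
    using total_wealth_finite(1)[OF nonneg] assms(2,3) by (intro summable_divide summable_diff)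
  then show ?thesis using moves by (simp add: wealth_Suc)
qed

lemma total_wealth_cong_prefix:
  assumes "\<And>m. nonanticipating (ns m) (Hs m)" and "\<forall>k\<le>j. S k = S' k"
  shows "total_wealth Vs ns Hs j S = total_wealth Vs ns Hs j S'"
  using wealth_cong_prefix[OF assms(1) assms(2)] by (simp add: total_wealth_def)

lemma wealth_finite_upto_cong_prefix:
  assumes "\<And>m. nonanticipating (ns m) (Hs m)" and "\<forall>k\<le>i. S k = S' k"
  shows "wealth_finite_upto Vs ns Hs i S = wealth_finite_upto Vs ns Hs i S'"
proof -
  have "total_wealth Vs ns Hs k S = total_wealth Vs ns Hs k S'" if "k \<le> i" for k
    using that assms by (intro total_wealth_cong_prefix) auto
  then show ?thesis by (simp add: wealth_finite_upto_def)
qed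

lemma superhedge_wealth_nonneg:
  assumes "stopping_closed \<S>" and "superhedges \<S> Vs ns Hs f" and "S \<in> \<S>"
  shows "0 \<le> wealth (Vs m) (ns m) (Hs m) j S"
  using assms positive_portfolio_wealth_nonneg by (simp add: superhedges_def)

lemma total_wealth_dominates:
  assumes "stopping_closed \<S>" and "simple_portfolio V n H"
    and sh: "superhedges \<S> Vs ns Hs (\<lambda>S. ereal (max (wealth_inf V n H S) 0))" and "S \<in> \<S>"
  shows "ereal (wealth V n H j S) \<le> total_wealth Vs ns Hs j S"
proof -
  have "nonanticipating n H" and "\<And>m. nonanticipating (ns m) (Hs m)"
    using assms(2) sh by (auto simp: superhedges_def positive_portfolio_def simple_portfolio_def)
  moreover have "stopped_traj S j \<in> \<S>" using assms(1,4) by (simp add: stopping_closed_def)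
  then have "ereal (max (wealth_inf V n H (stopped_traj S j)) 0)
      \<le> (\<Sum>m. ereal (wealth_inf (Vs m) (ns m) (Hs m) (stopped_traj S j)))"
    using sh unfolding superhedges_def by blast
  ultimately show ?thesis by (simp add: total_wealth_def wealth_inf_stopped_traj)
qed

definition aggregate_hedge ::
  "(nat \<Rightarrow> real) \<Rightarrow> (nat \<Rightarrow> nat) \<Rightarrow> (nat \<Rightarrow> nat \<Rightarrow> traj \<Rightarrow> real) \<Rightarrow> (nat \<Rightarrow> traj \<Rightarrow> real)
     \<Rightarrow> nat \<Rightarrow> traj \<Rightarrow> real" where
  "aggregate_hedge Vs ns Hs H i S =
     (if wealth_finite_upto Vs ns Hs i S \<and> summable (\<lambda>m. position (ns m) (Hs m) i S)
      then (\<Sum>m. position (ns m) (Hs m) i S) - H i S else 0)"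

lemma nonanticipating_aggregate_hedge:
  assumes "\<And>m. nonanticipating (ns m) (Hs m)" and "nonanticipating n H"
  shows "nonanticipating n (aggregate_hedge Vs ns Hs H)"
  unfolding nonanticipating_def
proof (intro allI impI)
  fix i and S S' :: traj
  assume "i < n" and prefix: "\<forall>k\<le>i. S k = S' k"
  then have "H i S = H i S'" using assms(2) by (simp add: nonanticipating_def)
  moreover have "(\<lambda>m. position (ns m) (Hs m) i S) = (\<lambda>m. position (ns m) (Hs m) i S')"
    using position_cong_prefix[OF assms(1) prefix] by simp
  ultimately show "aggregate_hedge Vs ns Hs H i S = aggregate_hedge Vs ns Hs H i S'"
    using wealth_finite_upto_cong_prefix[OF assms(1) prefix] by (simp add: aggregate_hedge_def)
qed

lemma aggregate_wealth_eq:
  assumes nonneg: "\<And>m j. 0 \<le> wealth (Vs m) (ns m) (Hs m) j S"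
    and cost: "(\<Sum>m. ereal (Vs m)) = ereal c"
  shows "j \<le> n \<Longrightarrow> wealth_finite_upto Vs ns Hs j S \<Longrightarrow>
    ereal (wealth (c - V) n (aggregate_hedge Vs ns Hs H) j S + wealth V n H j S) = total_wealth Vs ns Hs j S"
proof (induction j)
  case 0
  then show ?case using cost by simp
next
  case (Suc j)
  let ?Y = "\<lambda>j. wealth (c - V) n (aggregate_hedge Vs ns Hs H) j S"
  let ?p = "\<lambda>m. position (ns m) (Hs m) j S"
  have "j < n" and finite_upto: "wealth_finite_upto Vs ns Hs j S" using Suc.prems
    by (auto simp: wealth_finite_upto_def)
  then have IH: "ereal (?Y j + wealth V n H j S) = total_wealth Vs ns Hs j S" using Suc.IH by simp
  have finite: "total_wealth Vs ns Hs j S < \<infinity>" "total_wealth Vs ns Hs (Suc j) S < \<infinity>"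
    using Suc.prems by (auto simp: wealth_finite_upto_def)
  show ?case
  proof (cases "summable ?p")
    case True
    then have agg: "aggregate_hedge Vs ns Hs H j S + H j S = suminf ?p"
      using finite_upto by (simp add: aggregate_hedge_def)
    have "?Y (Suc j) + wealth V n H (Suc j) S
        = ?Y j + wealth V n H j S + (aggregate_hedge Vs ns Hs H j S + H j S) * (S (Suc j) - S j)"
      using \<open>j < n\<close> by (simp add: wealth_Suc position_def algebra_simps)
    also have "\<dots> = ?Y j + wealth V n H j S + suminf ?p * (S (Suc j) - S j)"
      by (simp only: agg)
    finally show ?thesis using total_wealth_Suc[OF nonneg finite(1) True] by (simp flip: IH)
  next
    case False
    then have "S (Suc j) = S j"
      using summable_position_if_price_moves[OF nonneg finite] by blast
    then show ?thesis using IH by (simp add: wealth_Suc total_wealth_def)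
  qed
qed

lemma aggregate_hedge_eq_0:
  assumes nonneg: "\<And>m j. 0 \<le> wealth (Vs m) (ns m) (Hs m) j S"
    and blowup: "\<not> wealth_finite_upto Vs ns Hs (Suc j) S"
  shows "aggregate_hedge Vs ns Hs H j S = 0"
proof -
  have "\<not> (wealth_finite_upto Vs ns Hs j S \<and> summable (\<lambda>m. position (ns m) (Hs m) j S))"
  proof
    assume *: "wealth_finite_upto Vs ns Hs j S \<and> summable (\<lambda>m. position (ns m) (Hs m) j S)"
    then have "total_wealth Vs ns Hs (Suc j) S < \<infinity>"
      using total_wealth_Suc[OF nonneg] by (simp add: wealth_finite_upto_def)
    with * blowup show False by (auto simp: wealth_finite_upto_def le_Suc_eq)
  qed
  then show ?thesis unfolding aggregate_hedge_def by (rule if_not_P)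
qed

lemma aggregate_wealth_nonneg:
  assumes nonneg: "\<And>m j. 0 \<le> wealth (Vs m) (ns m) (Hs m) j S"
    and cost: "(\<Sum>m. ereal (Vs m)) = ereal c"
    and dominated: "\<And>j. ereal (wealth V n H j S) \<le> total_wealth Vs ns Hs j S"
  shows "j \<le> n \<Longrightarrow> 0 \<le> wealth (c - V) n (aggregate_hedge Vs ns Hs H) j S"
proof (induction j)
  case 0
  then show ?case using dominated[of 0] cost by simp
next
  case (Suc j)
  show ?case
  proof (cases "wealth_finite_upto Vs ns Hs (Suc j) S")
    case True
    then have "ereal (wealth V n H (Suc j) S)
        \<le> ereal (wealth (c - V) n (aggregate_hedge Vs ns Hs H) (Suc j) S + wealth V n H (Suc j) S)"
      using aggregate_wealth_eq[OF nonneg cost Suc.prems True] dominated[of "Suc j"] by simp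
    then show ?thesis by simp
  next
    case False
    then show ?thesis
      using Suc aggregate_hedge_eq_0[OF nonneg False] by (simp add: wealth_Suc position_def)
  qed
qed

lemma positive_portfolio_gated_finite_wealth:
  assumes closed: "stopping_closed \<S>" and sh: "superhedges \<S> Vs ns Hs f" and "0 \<le> d"
  shows "positive_portfolio \<S> (d * Vs m) (ns m) (gated (wealth_finite_upto Vs ns Hs) d (Hs m))"
proof -
  have pos: "\<And>m. positive_portfolio \<S> (Vs m) (ns m) (Hs m)" using sh by (simp add: superhedges_def)
  then have nonant: "\<And>m. nonanticipating (ns m) (Hs m)"
    by (simp add: positive_portfolio_def simple_portfolio_def)
  show ?thesis
  proof (rule positive_portfolio_gated[OF closed pos \<open>0 \<le> d\<close>])
    show "wealth_finite_upto Vs ns Hs i S = wealth_finite_upto Vs ns Hs i S'"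
      if "\<forall>k\<le>i. S k = S' k" for i S S'
      using nonant that by (rule wealth_finite_upto_cong_prefix)
  qed (auto simp: wealth_finite_upto_def)
qed

lemma gated_total_wealth_infinite:
  assumes nonneg: "\<And>m j. 0 \<le> wealth (Vs m) (ns m) (Hs m) j S"
    and blowup: "\<not> wealth_finite_upto Vs ns Hs n S" and "0 < d"
  shows "(\<Sum>m. ereal (wealth_inf (d * Vs m) (ns m) (gated (wealth_finite_upto Vs ns Hs) d (Hs m)) S)) = \<infinity>"
proof -
  obtain t where cut: "\<And>i. wealth_finite_upto Vs ns Hs i S \<longleftrightarrow> i < t"
    using nat_downclosed_cut[of "\<lambda>i. wealth_finite_upto Vs ns Hs i S", OF _ blowup]
    by (auto simp: wealth_finite_upto_def)
  have "total_wealth Vs ns Hs t S = \<infinity>"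
    using cut[of t] cut by (auto simp: wealth_finite_upto_def order.order_iff_strict)
  then have "(\<Sum>m. ereal d * ereal (wealth (Vs m) (ns m) (Hs m) t S)) = \<infinity>"
    using suminf_cmult_ereal[of "\<lambda>m. ereal (wealth (Vs m) (ns m) (Hs m) t S)" d] nonneg \<open>0 < d\<close>
    by (simp add: total_wealth_def)
  moreover have "wealth_inf (d * Vs m) (ns m) (gated (wealth_finite_upto Vs ns Hs) d (Hs m)) S
      = d * wealth (Vs m) (ns m) (Hs m) t S" for m
    by (rule wealth_inf_gated) (simp add: cut)
  ultimately show ?thesis by simp
qed

lemma neg_part_le_aggregate_wealth:
  assumes nonneg: "\<And>m j. 0 \<le> wealth (Vs m) (ns m) (Hs m) j S"
    and cost: "(\<Sum>m. ereal (Vs m)) = ereal c"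
    and dominated: "\<And>j. ereal (wealth V n H j S) \<le> total_wealth Vs ns Hs j S"
    and finite: "wealth_finite_upto Vs ns Hs n S"
  shows "max (- wealth_inf V n H S) 0 \<le> wealth_inf (c - V) n (aggregate_hedge Vs ns Hs H) S"
proof -
  have "0 \<le> total_wealth Vs ns Hs n S"
    unfolding total_wealth_def using nonneg by (simp add: suminf_nonneg summable_ereal_pos)
  moreover have "ereal (wealth (c - V) n (aggregate_hedge Vs ns Hs H) n S + wealth V n H n S)
      = total_wealth Vs ns Hs n S"
    by (rule aggregate_wealth_eq[OF nonneg cost order.refl finite])
  ultimately have "0 \<le> wealth (c - V) n (aggregate_hedge Vs ns Hs H) n S + wealth V n H n S"
    by (metis ereal_less_eq(5))
  then show ?thesis
    using aggregate_wealth_nonneg[OF nonneg cost dominated order.refl] by (simp add: wealth_inf_def)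
qed

lemma positive_portfolio_aggregate:
  assumes closed: "stopping_closed \<S>" and "\<S> \<noteq> {}" and sp: "simple_portfolio V n H"
    and sh: "superhedges \<S> Vs ns Hs (\<lambda>S. ereal (max (wealth_inf V n H S) 0))"
    and cost: "(\<Sum>m. ereal (Vs m)) = ereal c"
  shows "positive_portfolio \<S> (c - V) n (aggregate_hedge Vs ns Hs H)"
proof -
  note nonneg = superhedge_wealth_nonneg[OF closed sh]
  note Y_nonneg = aggregate_wealth_nonneg[OF nonneg cost total_wealth_dominates[OF closed sp sh]]
  obtain S where "S \<in> \<S>" using \<open>\<S> \<noteq> {}\<close> by blast
  have "\<And>m. nonanticipating (ns m) (Hs m)"
    using sh by (simp add: superhedges_def positive_portfolio_def simple_portfolio_def)
  then have "nonanticipating n (aggregate_hedge Vs ns Hs H)"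
    using sp by (simp add: nonanticipating_aggregate_hedge simple_portfolio_def)
  moreover have "0 \<le> c - V" using Y_nonneg[of S 0] \<open>S \<in> \<S>\<close> by simp
  ultimately show ?thesis
    using sp Y_nonneg[of _ n] by (simp add: positive_portfolio_def simple_portfolio_def wealth_inf_def)
qed

lemma suminf_ereal_case_nat_scaled:
  assumes "\<And>m. 0 \<le> f m" and "(\<Sum>m. ereal (f m)) = ereal c"
  shows "(\<Sum>m. ereal (case_nat a (\<lambda>m. d * f m) m)) = ereal (a + d * c)"
proof -
  have "summable f" and "suminf f = c"
    using summable_ereal[of f] suminf_ereal[of f] assms by simp_all
  then have "f sums c" by (metis summable_sums)
  then have "(\<lambda>m. case_nat a (\<lambda>m. d * f m) (Suc m)) sums (d * c)"
    by (simp add: sums_mult)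
  then have "case_nat a (\<lambda>m. d * f m) sums (d * c + case_nat a (\<lambda>m. d * f m) 0)"
    by (rule sums_Suc)
  then have "(\<Sum>m. ereal (case_nat a (\<lambda>m. d * f m) m)) = ereal (d * c + a)"
    by (simp add: sums_suminf_ereal)
  then show ?thesis by (simp add: add.commute)
qed

lemma Ibar_le_cost:
  assumes "superhedges \<S> Vs ns Hs f"
  shows "Ibar \<S> f \<le> (\<Sum>m. ereal (Vs m))"
  unfolding Ibar_def by (rule INF_lower2[of "(Vs, ns, Hs)"]) (use assms in auto)

lemma le_Ibar:
  assumes "\<And>Vs ns Hs. superhedges \<S> Vs ns Hs f \<Longrightarrow> x \<le> (\<Sum>m. ereal (Vs m))"
  shows "x \<le> Ibar \<S> f"
  unfolding Ibar_def by (rule INF_greatest) (use assms in auto)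

(* The weight d of the stopped copies must be positive: in ereal, 0 * \<infinity> = 0. *)
lemma Ibar_neg_part_le:
  assumes closed: "stopping_closed \<S>" and "\<S> \<noteq> {}" and sp: "simple_portfolio V n H"
    and sh: "superhedges \<S> Vs ns Hs (\<lambda>S. ereal (max (wealth_inf V n H S) 0))"
    and cost: "(\<Sum>m. ereal (Vs m)) = ereal c" and "0 < d"
  shows "Ibar \<S> (\<lambda>S. ereal (max (- wealth_inf V n H S) 0)) \<le> ereal (c - V + d * c)"
proof -
  let ?G = "\<lambda>m. gated (wealth_finite_upto Vs ns Hs) d (Hs m)"
  define Vs' where "Vs' = case_nat (c - V) (\<lambda>m. d * Vs m)"
  define ns' where "ns' = case_nat n ns"
  define Hs' where "Hs' = case_nat (aggregate_hedge Vs ns Hs H) ?G"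
  let ?W = "\<lambda>S m. ereal (wealth_inf (Vs' m) (ns' m) (Hs' m) S)"
  have pos': "positive_portfolio \<S> (Vs' m) (ns' m) (Hs' m)" for m
    using positive_portfolio_aggregate[OF closed \<open>\<S> \<noteq> {}\<close> sp sh cost]
      positive_portfolio_gated_finite_wealth[OF closed sh] \<open>0 < d\<close>
    by (cases m) (simp_all add: Vs'_def ns'_def Hs'_def)
  have "ereal (max (- wealth_inf V n H S) 0) \<le> (\<Sum>m. ?W S m)" if "S \<in> \<S>" for S
  proof -
    note nonneg = superhedge_wealth_nonneg[OF closed sh that]
    have W_nonneg: "0 \<le> ?W S m" for m using pos' that by (simp add: positive_portfolio_def)
    show ?thesis
    proof (cases "wealth_finite_upto Vs ns Hs n S")
      case True
      then have "ereal (max (- wealth_inf V n H S) 0) \<le> ?W S 0"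
        using neg_part_le_aggregate_wealth[OF nonneg cost total_wealth_dominates[OF closed sp sh that]]
        by (simp add: Vs'_def ns'_def Hs'_def)
      also have "\<dots> \<le> (\<Sum>m. ?W S m)" using suminf_upper[of "?W S" 1] W_nonneg by simp
      finally show ?thesis .
    next
      case False
      then have "(\<Sum>m. ?W S (m + 1)) = \<infinity>"
        using gated_total_wealth_infinite[OF nonneg False \<open>0 < d\<close>] by (simp add: Vs'_def ns'_def Hs'_def)
      moreover have "(\<Sum>m. ?W S (m + 1)) \<le> (\<Sum>m. ?W S m)"
        using W_nonneg by (rule suminf_ereal_offset_le)
      ultimately show ?thesis by simp
    qed
  qed
  moreover have "(\<Sum>m. ereal (Vs' m)) = ereal (c - V + d * c)"
    unfolding Vs'_def
  proof (rule suminf_ereal_case_nat_scaled[OF _ cost])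
    show "0 \<le> Vs m" for m using sh by (simp add: superhedges_def positive_portfolio_def)
  qed
  ultimately show ?thesis
    using pos' Ibar_le_cost[of \<S> Vs' ns' Hs'] unfolding superhedges_def by auto
qed

lemma condK_if_stopping_closed:
  assumes closed: "stopping_closed \<S>" and "\<S> \<noteq> {}"
  shows "condK \<S>"
  unfolding condK_def
proof (intro allI impI)
  fix V n H assume sp: "simple_portfolio V n H"
  show "ereal V + Ibar \<S> (\<lambda>S. ereal (max (- wealth_inf V n H S) 0))
      \<le> Ibar \<S> (\<lambda>S. ereal (max (wealth_inf V n H S) 0))"
  proof (rule le_Ibar)
    fix Vs ns Hs assume sh: "superhedges \<S> Vs ns Hs (\<lambda>S. ereal (max (wealth_inf V n H S) 0))"
    have "0 \<le> (\<Sum>m. ereal (Vs m))"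
      using sh by (simp add: superhedges_def positive_portfolio_def suminf_nonneg summable_ereal_pos)
    then consider "(\<Sum>m. ereal (Vs m)) = \<infinity>" | c where "(\<Sum>m. ereal (Vs m)) = ereal c" "0 \<le> c"
      by (cases "\<Sum>m. ereal (Vs m)") auto
    then show "ereal V + Ibar \<S> (\<lambda>S. ereal (max (- wealth_inf V n H S) 0)) \<le> (\<Sum>m. ereal (Vs m))"
      (is "?lhs \<le> _")
    proof cases
      case (2 c)
      have "?lhs \<le> ereal c + ereal e" if "0 < e" for e
      proof -
        define d where "d = e / (c + 1)"
        have "0 < d" and "d * c \<le> e"
          using \<open>0 < e\<close> \<open>0 \<le> c\<close> by (auto simp: d_def field_simps)
        have "?lhs \<le> ereal V + ereal (c - V + d * c)"
          using Ibar_neg_part_le[OF closed \<open>\<S> \<noteq> {}\<close> sp sh \<open>_ = ereal c\<close> \<open>0 < d\<close>]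
          by (rule add_left_mono)
        also have "\<dots> \<le> ereal c + ereal e" using \<open>d * c \<le> e\<close> by simp
        finally show ?thesis .
      qed
      then have "?lhs \<le> ereal c" by (rule ereal_le_epsilon2)
      with \<open>_ = ereal c\<close> show ?thesis by simp
    qed simp
  qed
qed

theorem corollary5p2:
  fixes s0 :: real and \<S> :: "(nat \<Rightarrow> real) set"
  assumes "trajectory_set s0 \<S>"
    and "\<S> \<noteq> {}"
    and "\<forall>S\<in>\<S>. \<forall>j::nat. (\<lambda>i. S (min i j)) \<in> \<S>"
  shows "LOP \<S> \<and> condK \<S>"
proof
  have closed: "stopping_closed \<S>"
    using assms(3) by (simp add: stopping_closed_def stopped_traj_def)
  obtain S where "S \<in> \<S>" using assms(2) by blast
  then have "stopped_traj S 0 \<in> \<S>" using closed by (simp add: stopping_closed_def)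
  then show "LOP \<S>" by (intro LOP_if_constant_trajectory[of "S 0"]) (simp add: stopped_traj_def)
  show "condK \<S>" using closed assms(2) by (rule condK_if_stopping_closed)
qed

end
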